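(* Let $n,d,a$ be positive integers and $g:=\gcd(d,n)$. If $g\nmid a$, then the triple $(n,d,a)$ is bad.
   Context: Let $R=\mathbb{C}[x_1,\dots,x_n]$ with $\mathfrak{S}_n$ permuting the variables and $R_a^{\mathfrak{S}_n}$ the symmetric polynomials homogeneous of degree $a$. A triple $(n,d,a)$ of positive integers is good if there exists $f\in R_a^{\mathfrak{S}_n}$ such that $x_1^d-x_n^d,\dots,x_{n-1}^d-x_n^d,f$ is a regular sequence (equivalently, $f$ has no zero on $\mathcal{V}_d=\{(z_1,\dots,z_n)\in\mathbb{C}^n: z_i^d=1\ \forall i,\ z_n=1\}$); otherwise it is bad. *)

theory Defs
  imports Complex_Main "HOL-Combinatorics.Permutations"
begin

text \<open>Polynomials in the variables x_0,...,x_(n-1) (0-based indexing of x_1..x_n).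
  A homogeneous polynomial of degree a is given by a coefficient function on exponent
  vectors; only exponent vectors in hmonos n a matter.\<close>

definition hmonos :: "nat \<Rightarrow> nat \<Rightarrow> (nat \<Rightarrow> nat) set" where
  "hmonos n a = {\<alpha>. (\<forall>i\<ge>n. \<alpha> i = 0) \<and> (\<Sum>i<n. \<alpha> i) = a}"

definition hom_eval :: "nat \<Rightarrow> nat \<Rightarrow> ((nat \<Rightarrow> nat) \<Rightarrow> complex) \<Rightarrow> (nat \<Rightarrow> complex) \<Rightarrow> complex" where
  "hom_eval n a c z = (\<Sum>\<alpha>\<in>hmonos n a. c \<alpha> * (\<Prod>i<n. z i ^ \<alpha> i))"

definition sym_coeffs :: "nat \<Rightarrow> nat \<Rightarrow> ((nat \<Rightarrow> nat) \<Rightarrow> complex) \<Rightarrow> bool" where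
  "sym_coeffs n a c \<longleftrightarrow> (\<forall>\<sigma>. \<sigma> permutes {..<n} \<longrightarrow> (\<forall>\<alpha>\<in>hmonos n a. c (\<alpha> \<circ> \<sigma>) = c \<alpha>))"

text \<open>V_d = {z : z_i^d = 1 for all i, z_n = 1} (last variable is index n-1).\<close>
definition Vset :: "nat \<Rightarrow> nat \<Rightarrow> (nat \<Rightarrow> complex) set" where
  "Vset n d = {z. (\<forall>i<n. z i ^ d = 1) \<and> z (n - 1) = 1}"

definition good_triple :: "nat \<Rightarrow> nat \<Rightarrow> nat \<Rightarrow> bool" where
  "good_triple n d a \<longleftrightarrow>
     (\<exists>c. sym_coeffs n a c \<and> (\<forall>z\<in>Vset n d. hom_eval n a c z \<noteq> 0))"

definition bad_triple :: "nat \<Rightarrow> nat \<Rightarrow> nat \<Rightarrow> bool" where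
  "bad_triple n d a \<longleftrightarrow> \<not> good_triple n d a"

end

theory Submission
  imports Defs "HOL-Analysis.Analysis"
begin

text \<open>Let \<zeta> be a primitive g-th root of unity, g = gcd d n, and z_i = \<zeta>^(i+1). Then z lies in
  V_d, and the cyclic shift of the variables maps z to \<zeta> z. A symmetric f homogeneous of
  degree a therefore satisfies f(z) = f(\<zeta> z) = \<zeta>^a f(z), and \<zeta>^a \<noteq> 1 forces f(z) = 0.\<close>

lemma exists_primitive_root_of_unity:
  fixes g :: nat
  assumes "0 < g"
  obtains \<zeta> :: complex where "\<And>k. \<zeta> ^ k = 1 \<longleftrightarrow> g dvd k"
proof
  fix k :: nat
  have "exp (2 * pi * \<i> / of_nat g) ^ k = exp (2 * of_real pi * \<i> * of_nat k / of_nat g)"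
    by (simp flip: exp_of_nat_mult add: field_simps)
  then show "exp (2 * pi * \<i> / of_nat g) ^ k = 1 \<longleftrightarrow> g dvd k"
    using complex_root_unity_eq_1[of g k] assms by simp
qed

lemma hmonos_permute:
  assumes "\<sigma> permutes {..<n}" and "\<alpha> \<in> hmonos n a"
  shows "\<alpha> \<circ> \<sigma> \<in> hmonos n a"
  using assms sum.permute[OF assms(1), of \<alpha>]
  by (simp add: hmonos_def permutes_not_in comp_def)

lemma bij_betw_hmonos_permute:
  assumes \<sigma>: "\<sigma> permutes {..<n}"
  shows "bij_betw (\<lambda>\<alpha>. \<alpha> \<circ> \<sigma>) (hmonos n a) (hmonos n a)"
proof (rule bij_betw_byWitness[where f' = "\<lambda>\<alpha>. \<alpha> \<circ> inv \<sigma>"])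
  have \<sigma>': "inv \<sigma> permutes {..<n}"
    using \<sigma> by (rule permutes_inv)
  show "\<forall>\<alpha>\<in>hmonos n a. \<alpha> \<circ> \<sigma> \<circ> inv \<sigma> = \<alpha>" "\<forall>\<alpha>\<in>hmonos n a. \<alpha> \<circ> inv \<sigma> \<circ> \<sigma> = \<alpha>"
    using \<sigma> by (simp_all add: o_assoc[symmetric] permutes_inv_o)
  show "(\<lambda>\<alpha>. \<alpha> \<circ> \<sigma>) ` hmonos n a \<subseteq> hmonos n a" "(\<lambda>\<alpha>. \<alpha> \<circ> inv \<sigma>) ` hmonos n a \<subseteq> hmonos n a"
    using hmonos_permute[OF \<sigma>] hmonos_permute[OF \<sigma>'] by auto
qed

lemma hom_eval_permute:
  assumes "sym_coeffs n a c" and \<sigma>: "\<sigma> permutes {..<n}"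
  shows "hom_eval n a c (z \<circ> \<sigma>) = hom_eval n a c z"
proof -
  have "hom_eval n a c (z \<circ> \<sigma>) =
      (\<Sum>\<alpha>\<in>hmonos n a. c (\<alpha> \<circ> \<sigma>) * (\<Prod>i<n. z (\<sigma> i) ^ \<alpha> (\<sigma> i)))"
    unfolding hom_eval_def
    by (subst sum.reindex_bij_betw[OF bij_betw_hmonos_permute[OF \<sigma>], symmetric]) simp
  also have "\<dots> = (\<Sum>\<alpha>\<in>hmonos n a. c \<alpha> * (\<Prod>i<n. z i ^ \<alpha> i))"
    using assms prod.permute[OF \<sigma>, of "\<lambda>i. z i ^ _ i"]
    by (intro sum.cong) (auto simp: sym_coeffs_def comp_def)
  finally show ?thesis
    unfolding hom_eval_def .
qed

lemma hom_eval_homogeneous: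
  assumes "\<And>i. i < n \<Longrightarrow> w i = t * z i"
  shows "hom_eval n a c w = t ^ a * hom_eval n a c z"
proof -
  have "c \<alpha> * (\<Prod>i<n. w i ^ \<alpha> i) = t ^ a * (c \<alpha> * (\<Prod>i<n. z i ^ \<alpha> i))"
    if "\<alpha> \<in> hmonos n a" for \<alpha>
    using that assms
    by (simp add: hmonos_def power_mult_distrib prod.distrib power_sum[symmetric])
  then show ?thesis
    unfolding hom_eval_def sum_distrib_left by (rule sum.cong[OF refl])
qed

lemma symmetric_hom_eval_eq_0:
  assumes "sym_coeffs n a c" and "\<sigma> permutes {..<n}"
    and "\<And>i. i < n \<Longrightarrow> z (\<sigma> i) = t * z i" and "t ^ a \<noteq> 1"
  shows "hom_eval n a c z = 0"
proof -
  have "hom_eval n a c z = t ^ a * hom_eval n a c z"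
    using hom_eval_permute[OF assms(1,2), of z] hom_eval_homogeneous[of n "z \<circ> \<sigma>" t z a c] assms(3)
    by simp
  with assms(4) show ?thesis
    by (metis mult_cancel_right2)
qed

definition cyclic_shift :: "nat \<Rightarrow> nat \<Rightarrow> nat" where
  "cyclic_shift n i = (if i < n then Suc i mod n else i)"

lemma cyclic_shift_permutes:
  assumes "0 < n"
  shows "cyclic_shift n permutes {..<n}"
proof (rule bij_imp_permutes)
  have "inj_on (cyclic_shift n) {..<n}"
    by (rule inj_onI) (auto simp: cyclic_shift_def mod_Suc split: if_splits)
  moreover have "cyclic_shift n ` {..<n} \<subseteq> {..<n}"
    using assms by (auto simp: cyclic_shift_def)
  ultimately show "bij_betw (cyclic_shift n) {..<n} {..<n}"
    by (simp add: bij_betw_def endo_inj_surj)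
  show "\<And>i. i \<notin> {..<n} \<Longrightarrow> cyclic_shift n i = i"
    by (simp add: cyclic_shift_def)
qed

lemma power_cyclic_shift:
  fixes \<zeta> :: "'a :: monoid_mult"
  assumes "\<zeta> ^ n = 1" and "i < n"
  shows "\<zeta> ^ Suc (cyclic_shift n i) = \<zeta> * \<zeta> ^ Suc i"
proof -
  have "\<zeta> ^ Suc (Suc i) = \<zeta> ^ Suc (Suc i mod n) * (\<zeta> ^ n) ^ (Suc i div n)"
    by (metis mod_mult_div_eq add_Suc power_add power_mult)
  with assms show ?thesis
    by (simp add: cyclic_shift_def)
qed

theorem proposition3p15:
  fixes n d a :: nat
  assumes "0 < n" and "0 < d" and "0 < a"
    and "\<not> gcd d n dvd a"
  shows "bad_triple n d a"
proof -
  obtain \<zeta> :: complex where \<zeta>: "\<And>k. \<zeta> ^ k = 1 \<longleftrightarrow> gcd d n dvd k"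
    using exists_primitive_root_of_unity[of "gcd d n"] assms(1) by auto
  define z where "z i = \<zeta> ^ Suc i" for i
  have "z i ^ d = 1" for i
    unfolding z_def power_mult[symmetric] \<zeta> by simp
  then have "z \<in> Vset n d"
    using \<zeta> assms(1) by (simp add: Vset_def z_def)
  moreover have "hom_eval n a c z = 0" if "sym_coeffs n a c" for c
  proof (rule symmetric_hom_eval_eq_0[OF that cyclic_shift_permutes[OF assms(1)]])
    show "\<And>i. i < n \<Longrightarrow> z (cyclic_shift n i) = \<zeta> * z i"
      using power_cyclic_shift[of \<zeta> n] \<zeta> by (simp add: z_def)
    show "\<zeta> ^ a \<noteq> 1"
      using \<zeta> assms(4) by simp
  qed
  ultimately show ?thesis
    unfolding bad_triple_def good_triple_def by blast
qed

end
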